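(* Let $C=\{c_1,\dots,c_N\}\subset\mathbb{R}^d$ be an arbitrary finite set of centers and $P\subset\mathbb{R}^d$ an arbitrary finite nonempty set with $\mathrm{cost}(P,C)>0$. Pick a random point $c\in P$ with $\Pr(c=x)=\mathrm{cost}(x,C)/\mathrm{cost}(P,C)$ for $x\in P$, and let $C'=C\cup\{c\}$. Then $\mathbb{E}_c[\mathrm{cost}(P,C')]\le 5\,\mathrm{OPT}_1(P)$.
   Context: For a finite set $C\subset\mathbb{R}^d$ and a point $x$, $\mathrm{cost}(x,C)=\min_{c\in C}\|x-c\|^2$; for a finite set $\mathbf{Y}$, $\mathrm{cost}(\mathbf{Y},C)=\sum_{x\in\mathbf{Y}}\mathrm{cost}(x,C)$; $\mathrm{OPT}_1(\mathbf{Y})=\min_{z\in\mathbb{R}^d}\mathrm{cost}(\mathbf{Y},\{z\})$. *)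

theory Defs
  imports "HOL-Analysis.Analysis"
begin

definition cost_pt :: "'a::euclidean_space \<Rightarrow> 'a set \<Rightarrow> real" where
  "cost_pt x C = Min ((\<lambda>c. (norm (x - c))\<^sup>2) ` C)"

definition cost :: "'a::euclidean_space set \<Rightarrow> 'a set \<Rightarrow> real" where
  "cost Y C = (\<Sum>x\<in>Y. cost_pt x C)"

definition OPT1 :: "'a::euclidean_space set \<Rightarrow> real" where
  "OPT1 Y = (INF z. cost Y {z})"

end

theory Submission
  imports Defs
begin

text \<open>Write \<open>D x = cost(x, C)\<close>. The expectation equals \<open>G / cost(P, C)\<close> with
  \<open>G = \<Sum>x \<Sum>y D x \<cdot> min (D y) |x - y|\<^sup>2\<close>. Since \<open>\<surd>D\<close> is 1-Lipschitz, an elementary inequality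
  for \<open>a, b, p\<close> with \<open>|a - b| \<le> p\<close> bounds each symmetrised summand by
  \<open>5 \<cdot> min (D x) (D y) \<cdot> |x - y|\<^sup>2\<close>. Repeatedly peeling off the smallest weight (a discrete
  layer-cake decomposition) reduces \<open>\<Sum>x \<Sum>y min (D x) (D y) \<cdot> |x - y|\<^sup>2\<close> to the bound
  \<open>\<Sum>x \<Sum>y |x - y|\<^sup>2 \<le> 2 |A| \<Sum>x |x - z|\<^sup>2\<close> on the level sets \<open>A\<close>, which yields
  \<open>2 \<cdot> cost(P, C) \<cdot> cost(P, {z})\<close> for every \<open>z\<close>.\<close>

lemma sq_min_pair_le_ordered:
  fixes a b p :: real
  assumes "0 \<le> a" "a \<le> b" "b \<le> a + p"
  shows "b\<^sup>2 * min (a\<^sup>2) (p\<^sup>2) + a\<^sup>2 * min (b\<^sup>2) (p\<^sup>2) \<le> 5 * a\<^sup>2 * p\<^sup>2"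
proof (cases "p \<le> a")
  case True
  have "b\<^sup>2 \<le> (2 * a)\<^sup>2" using assms True by (intro power_mono) auto
  then have "b\<^sup>2 * p\<^sup>2 \<le> 4 * a\<^sup>2 * p\<^sup>2" by (simp add: mult_right_mono)
  moreover have "min (a\<^sup>2) (p\<^sup>2) = p\<^sup>2" "min (b\<^sup>2) (p\<^sup>2) = p\<^sup>2"
    using assms True by (auto intro!: min_absorb2 power_mono)
  ultimately show ?thesis by simp
next
  case False
  then have min_a: "min (a\<^sup>2) (p\<^sup>2) = a\<^sup>2" using assms by (auto intro!: min_absorb1 power_mono)
  show ?thesis
  proof (cases "p \<le> b")
    case True
    have "b\<^sup>2 \<le> (2 * p)\<^sup>2" using assms False by (intro power_mono) auto
    then have "b\<^sup>2 * a\<^sup>2 \<le> 4 * p\<^sup>2 * a\<^sup>2" by (simp add: mult_right_mono)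
    moreover have "min (b\<^sup>2) (p\<^sup>2) = p\<^sup>2" using assms True by (auto intro!: min_absorb2 power_mono)
    ultimately show ?thesis using min_a by (simp add: algebra_simps)
  next
    case False
    then have "b\<^sup>2 \<le> p\<^sup>2" using assms by (auto intro!: power_mono)
    then have "b\<^sup>2 * min (a\<^sup>2) (p\<^sup>2) + a\<^sup>2 * min (b\<^sup>2) (p\<^sup>2) = 2 * (a\<^sup>2 * b\<^sup>2)"
      using min_a by simp
    also have "\<dots> \<le> 2 * (a\<^sup>2 * p\<^sup>2)" using \<open>b\<^sup>2 \<le> p\<^sup>2\<close> by (simp add: mult_left_mono)
    also have "\<dots> \<le> 5 * a\<^sup>2 * p\<^sup>2" by simp
    finally show ?thesis .
  qed
qed

lemma sq_min_pair_le:
  fixes a b p :: real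
  assumes "0 \<le> a" "0 \<le> b" "\<bar>a - b\<bar> \<le> p"
  shows "b\<^sup>2 * min (a\<^sup>2) (p\<^sup>2) + a\<^sup>2 * min (b\<^sup>2) (p\<^sup>2) \<le> 5 * min (a\<^sup>2) (b\<^sup>2) * p\<^sup>2"
proof (cases "a \<le> b")
  case True
  then have "min (a\<^sup>2) (b\<^sup>2) = a\<^sup>2" using assms by (simp add: power_mono)
  with True show ?thesis using sq_min_pair_le_ordered[of a b p] assms by simp
next
  case False
  then have "min (a\<^sup>2) (b\<^sup>2) = b\<^sup>2" using assms by (simp add: power_mono)
  with False show ?thesis using sq_min_pair_le_ordered[of b a p] assms by simp
qed

lemma sum_sum_dist_sq_le:
  fixes A :: "'a::real_inner set"
  shows "(\<Sum>x\<in>A. \<Sum>y\<in>A. (dist x y)\<^sup>2) \<le> 2 * card A * (\<Sum>x\<in>A. (dist x z)\<^sup>2)"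
proof -
  define u where "u = (\<Sum>x\<in>A. x - z)"
  have cross_terms: "(\<Sum>x\<in>A. \<Sum>y\<in>A. (x - z) \<bullet> (y - z)) = u \<bullet> u"
    unfolding u_def inner_sum_left inner_sum_right by (rule sum.swap)
  have "(\<Sum>x\<in>A. \<Sum>y\<in>A. (dist x y)\<^sup>2)
      = (\<Sum>x\<in>A. \<Sum>y\<in>A. (dist x z)\<^sup>2 + (dist y z)\<^sup>2 - 2 * ((x - z) \<bullet> (y - z)))"
    by (intro sum.cong refl)
      (simp add: dist_norm power2_norm_eq_inner inner_diff_left inner_diff_right inner_commute)
  also have "\<dots> = 2 * card A * (\<Sum>x\<in>A. (dist x z)\<^sup>2) - 2 * (\<Sum>x\<in>A. \<Sum>y\<in>A. (x - z) \<bullet> (y - z))"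
    by (simp add: sum.distrib sum_subtractf sum_distrib_left mult.assoc)
  also have "\<dots> \<le> 2 * card A * (\<Sum>x\<in>A. (dist x z)\<^sup>2)"
    unfolding cross_terms by simp
  finally show ?thesis .
qed

lemma sum_sum_min_weight_dist_sq_le:
  fixes A :: "'a::real_inner set" and D :: "'a \<Rightarrow> real"
  assumes "finite A" and "\<forall>x\<in>A. 0 \<le> D x"
  shows "(\<Sum>x\<in>A. \<Sum>y\<in>A. min (D x) (D y) * (dist x y)\<^sup>2)
    \<le> 2 * (\<Sum>x\<in>A. D x) * (\<Sum>x\<in>A. (dist x z)\<^sup>2)"
  using assms
proof (induction A arbitrary: D rule: finite_remove_induct)
  case empty
  then show ?case by simp
next
  case (remove A)
  define W where "W = (\<Sum>x\<in>A. (dist x z)\<^sup>2)"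
  define d where "d = Min (D ` A)"
  have "d \<in> D ` A" using remove.hyps by (simp add: d_def)
  then obtain y where y: "y \<in> A" "D y = d" by blast
  have d_le: "d \<le> D x" if "x \<in> A" for x
    using remove.hyps that by (simp add: d_def)
  define D' where "D' x = D x - d" for x
  have D'_nonneg: "\<forall>x\<in>A - {y}. 0 \<le> D' x"
    using d_le by (simp add: D'_def)
  txt \<open>Split off the minimal weight \<open>d\<close>: the \<open>d\<close>-layer is bounded by
    \<open>sum_sum_dist_sq_le\<close>; the remaining weights \<open>D'\<close> vanish at \<open>y\<close>, so induction on
    \<open>A - {y}\<close> bounds the rest.\<close>
  have min_split: "min (D x) (D w) = d + min (D' x) (D' w)" for x w
    by (simp add: D'_def min_def)
  have drop_y: "(\<Sum>x\<in>A. \<Sum>w\<in>A. min (D' x) (D' w) * (dist x w)\<^sup>2)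
      = (\<Sum>x\<in>A - {y}. \<Sum>w\<in>A - {y}. min (D' x) (D' w) * (dist x w)\<^sup>2)"
  proof -
    have "min (D' x) (D' y) = 0" "min (D' y) (D' x) = 0" if "x \<in> A" for x
      using d_le[OF that] y by (auto simp: D'_def min_def)
    then show ?thesis
      using remove.hyps(1) y(1) by (simp add: sum.remove[of A y])
  qed
  have "(\<Sum>x\<in>A - {y}. \<Sum>w\<in>A - {y}. min (D' x) (D' w) * (dist x w)\<^sup>2)
      \<le> 2 * (\<Sum>x\<in>A - {y}. D' x) * (\<Sum>x\<in>A - {y}. (dist x z)\<^sup>2)"
    using remove.IH[OF y(1) D'_nonneg] .
  also have "\<dots> \<le> 2 * (\<Sum>x\<in>A - {y}. D' x) * W"
    unfolding W_def using D'_nonneg remove.hyps(1)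
    by (intro mult_left_mono sum_mono2) (auto intro: sum_nonneg)
  finally have IH: "(\<Sum>x\<in>A. \<Sum>w\<in>A. min (D' x) (D' w) * (dist x w)\<^sup>2)
      \<le> 2 * (\<Sum>x\<in>A - {y}. D' x) * W" unfolding drop_y .
  have diam: "d * (\<Sum>x\<in>A. \<Sum>w\<in>A. (dist x w)\<^sup>2) \<le> d * (2 * card A * W)"
    using sum_sum_dist_sq_le[of A z] d_le[OF y(1)] remove.prems y
    unfolding W_def by (intro mult_left_mono) auto
  have "(\<Sum>x\<in>A. \<Sum>w\<in>A. min (D x) (D w) * (dist x w)\<^sup>2)
      = d * (\<Sum>x\<in>A. \<Sum>w\<in>A. (dist x w)\<^sup>2) + (\<Sum>x\<in>A. \<Sum>w\<in>A. min (D' x) (D' w) * (dist x w)\<^sup>2)"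
    by (simp only: min_split distrib_right sum.distrib sum_distrib_left)
  also have "\<dots> \<le> 2 * (d * card A + (\<Sum>x\<in>A - {y}. D' x)) * W"
    using diam IH by (simp add: algebra_simps)
  also have "d * card A + (\<Sum>x\<in>A - {y}. D' x) = (\<Sum>x\<in>A. D x)"
    using remove.hyps(1,2) y card_gt_0_iff[of A]
    by (simp add: D'_def sum_subtractf sum.remove[of A y] of_nat_diff algebra_simps)
  finally show ?case unfolding W_def .
qed

lemma cost_pt_insert:
  assumes "finite C" "C \<noteq> {}"
  shows "cost_pt y (insert x C) = min (cost_pt y C) ((dist y x)\<^sup>2)"
  using assms by (simp add: cost_pt_def dist_norm min.commute)

lemma cost_pt_attained:
  assumes "finite C" "C \<noteq> {}"
  obtains e where "e \<in> C" "cost_pt x C = (dist x e)\<^sup>2"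
proof -
  have "cost_pt x C \<in> (\<lambda>c. (norm (x - c))\<^sup>2) ` C"
    unfolding cost_pt_def using assms by (intro Min_in) auto
  then show ?thesis using that by (auto simp: dist_norm)
qed

lemma cost_pt_nonneg:
  assumes "finite C" "C \<noteq> {}"
  shows "0 \<le> cost_pt x C"
  using cost_pt_attained[OF assms, of x] by (metis zero_le_power2)

lemma sqrt_cost_pt_le:
  assumes "finite C" "C \<noteq> {}"
  shows "sqrt (cost_pt y C) \<le> sqrt (cost_pt x C) + dist x y"
proof -
  obtain e where e: "e \<in> C" "cost_pt x C = (dist x e)\<^sup>2"
    using cost_pt_attained[OF assms] .
  have "cost_pt y C \<le> (dist y e)\<^sup>2"
    unfolding cost_pt_def using assms e(1) by (intro Min_le) (auto simp: dist_norm)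
  then have "sqrt (cost_pt y C) \<le> dist y e"
    using real_sqrt_le_mono by fastforce
  also have "\<dots> \<le> dist x e + dist x y"
    using dist_triangle3[of y e x] by linarith
  finally show ?thesis using e(2) by simp
qed

lemma cost_singleton: "cost P {z} = (\<Sum>x\<in>P. (dist x z)\<^sup>2)"
  by (simp add: cost_def cost_pt_def dist_norm)

lemma OPT1_greatest:
  assumes "\<And>z. b \<le> cost P {z}"
  shows "b \<le> OPT1 P"
  unfolding OPT1_def using assms by (intro cINF_greatest) auto

lemma expected_cost_eq:
  assumes "finite C" "C \<noteq> {}"
  shows "(\<Sum>x\<in>P. (cost_pt x C / cost P C) * cost P (C \<union> {x}))
    = (\<Sum>x\<in>P. \<Sum>y\<in>P. cost_pt x C * min (cost_pt y C) ((dist y x)\<^sup>2)) / cost P C"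
  using assms
  by (simp add: cost_def cost_pt_insert sum_divide_distrib sum_distrib_left mult.commute)

lemma cost_pt_pair_le:
  assumes "finite C" "C \<noteq> {}"
  shows "cost_pt x C * min (cost_pt y C) ((dist y x)\<^sup>2) + cost_pt y C * min (cost_pt x C) ((dist x y)\<^sup>2)
    \<le> 5 * min (cost_pt x C) (cost_pt y C) * (dist x y)\<^sup>2"
proof -
  define a b where "a = sqrt (cost_pt y C)" and "b = sqrt (cost_pt x C)"
  have sq: "a\<^sup>2 = cost_pt y C" "b\<^sup>2 = cost_pt x C"
    using cost_pt_nonneg[OF assms] by (simp_all add: a_def b_def)
  have "\<bar>a - b\<bar> \<le> dist x y"
    using sqrt_cost_pt_le[OF assms, of x y] sqrt_cost_pt_le[OF assms, of y x]
    by (simp add: a_def b_def dist_commute abs_le_iff)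
  then have "b\<^sup>2 * min (a\<^sup>2) ((dist x y)\<^sup>2) + a\<^sup>2 * min (b\<^sup>2) ((dist x y)\<^sup>2)
      \<le> 5 * min (a\<^sup>2) (b\<^sup>2) * (dist x y)\<^sup>2"
    using cost_pt_nonneg[OF assms] by (intro sq_min_pair_le) (simp_all add: a_def b_def)
  then show ?thesis by (simp add: sq dist_commute min.commute)
qed

lemma sum_sum_cost_pt_le:
  assumes "finite C" "C \<noteq> {}"
  shows "2 * (\<Sum>x\<in>P. \<Sum>y\<in>P. cost_pt x C * min (cost_pt y C) ((dist y x)\<^sup>2))
    \<le> 5 * (\<Sum>x\<in>P. \<Sum>y\<in>P. min (cost_pt x C) (cost_pt y C) * (dist x y)\<^sup>2)"
proof -
  let ?g = "\<lambda>x y. cost_pt x C * min (cost_pt y C) ((dist y x)\<^sup>2)"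
  have "2 * (\<Sum>x\<in>P. \<Sum>y\<in>P. ?g x y) = (\<Sum>x\<in>P. \<Sum>y\<in>P. ?g x y) + (\<Sum>x\<in>P. \<Sum>y\<in>P. ?g y x)"
    using sum.swap[of ?g P P] by simp
  also have "\<dots> = (\<Sum>x\<in>P. \<Sum>y\<in>P. ?g x y + ?g y x)"
    by (simp only: sum.distrib)
  also have "\<dots> \<le> (\<Sum>x\<in>P. \<Sum>y\<in>P. 5 * min (cost_pt x C) (cost_pt y C) * (dist x y)\<^sup>2)"
    by (intro sum_mono cost_pt_pair_le[OF assms])
  finally show ?thesis by (simp add: sum_distrib_left mult.assoc)
qed

theorem mainTheorem3:
  fixes C P :: "'a::euclidean_space set"
  assumes "finite C" and "C \<noteq> {}"
    and "finite P" and "P \<noteq> {}"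
    and "cost P C > 0"
  shows "(\<Sum>x\<in>P. (cost_pt x C / cost P C) * cost P (C \<union> {x})) \<le> 5 * OPT1 P"
proof -
  let ?G = "\<Sum>x\<in>P. \<Sum>y\<in>P. cost_pt x C * min (cost_pt y C) ((dist y x)\<^sup>2)"
  have "?G / cost P C / 5 \<le> cost P {z}" for z
  proof -
    have "(\<Sum>x\<in>P. \<Sum>y\<in>P. min (cost_pt x C) (cost_pt y C) * (dist x y)\<^sup>2)
        \<le> 2 * cost P C * cost P {z}"
      using sum_sum_min_weight_dist_sq_le[OF assms(3), of "\<lambda>x. cost_pt x C" z]
        cost_pt_nonneg[OF assms(1,2)]
      by (simp add: cost_def[of P C] cost_singleton)
    then have "?G \<le> 5 * cost P C * cost P {z}"
      using sum_sum_cost_pt_le[OF assms(1,2), of P] by linarith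
    then show ?thesis
      using assms(5) by (simp add: divide_le_eq mult.commute mult.left_commute)
  qed
  then have "?G / cost P C / 5 \<le> OPT1 P"
    by (rule OPT1_greatest)
  then show ?thesis
    unfolding expected_cost_eq[OF assms(1,2)] by simp
qed

end
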